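(* In the construction below, every nonempty $E^*\subseteq E$ with $|E^*| < st+2k$ satisfies $\beta(E^* ) > B$; in particular, no such $E^*$ is an admissible solution of the constructed CSCN instance.
   Context: Let $G'=(V',E')$ be a connected undirected graph, let $S=\{u_1,\dots,u_s\}\subseteq V'$ with $s=|S|$, and let $k\ge 0$ be a real number with $|E'|\ge 2k$. Let $t\ge 1$ be an integer. Let $V = V'\cup\{v_{i,j} : 1\le i\le s,\ 1\le j\le t\}$ (the $v_{i,j}$ are new vertices) and let $E$ be the set of all pairs of vertices of $V$ (edges undirected). Define $w^*:E\to\mathbb{R}$ by: $w^*(\{v_{i,j},u_i\})=1$ for all $i,j$; $w^*(\{v_{i,j},u\})=0$ for every $u\in V\setminus\{u_i\}$; $w^*(e)=\frac12$ for every $e\in E'$; $w^*(\{u,u'\})=0$ for $u,u'\in V'$ with $\{u,u'\}\notin E'$. Set $A=\frac{st+k}{st+2k}$ and $B=\frac{\frac12(|E'|-2k)}{st+2k}$. For nonempty $E^*\subseteq E$ let $\alpha(E^* )=\frac{\sum_{e\in E^*}w^*(e)}{|E^*|}$ and $\beta(E^* )=\frac{\sum_{e\in E\setminus E^*}w^*(e)}{|E^*|}$. The graph induced by $E^*$ has vertex set the vertices incident to some edge of $E^*$ and edge set $E^*$. An admissible solution of the constructed CSCN instance is a nonempty $E^*\subseteq E$ whose induced graph is connected and which satisfies $\alpha(E^* )\ge A$ and $\beta(E^* )\le B$. *)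

theory Defs
  imports Complex_Main
begin

definition simple_edges :: "'v set \<Rightarrow> 'v set set" where
  "simple_edges V = {{x, y} | x y. x \<in> V \<and> y \<in> V \<and> x \<noteq> y}"

definition adj_rel :: "'v set set \<Rightarrow> ('v \<times> 'v) set" where
  "adj_rel E = {(x, y). {x, y} \<in> E \<and> x \<noteq> y}"

definition graph_connected :: "'v set \<Rightarrow> 'v set set \<Rightarrow> bool" where
  "graph_connected V E \<longleftrightarrow> (\<forall>x\<in>V. \<forall>y\<in>V. (x, y) \<in> (adj_rel E)\<^sup>*)"

(* Construction: old vertices Inl v (v in V'), new vertices v_{i,j} = Inr (i,j);
   S = {u 1, ..., u s}. *)
definition cscn_V :: "'a set \<Rightarrow> nat \<Rightarrow> nat \<Rightarrow> ('a + nat \<times> nat) set" where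
  "cscn_V V' s t = Inl ` V' \<union> Inr ` ({1..s} \<times> {1..t})"

definition cscn_E :: "'a set \<Rightarrow> nat \<Rightarrow> nat \<Rightarrow> ('a + nat \<times> nat) set set" where
  "cscn_E V' s t = simple_edges (cscn_V V' s t)"

definition cscn_w :: "'a set set \<Rightarrow> (nat \<Rightarrow> 'a) \<Rightarrow> nat \<Rightarrow> nat \<Rightarrow> ('a + nat \<times> nat) set \<Rightarrow> real" where
  "cscn_w E' u s t e =
     (if \<exists>i\<in>{1..s}. \<exists>j\<in>{1..t}. e = {Inr (i, j), Inl (u i)} then 1
      else if \<exists>p. Inr p \<in> e then 0
      else if e \<in> (`) Inl ` E' then 1/2
      else 0)"

definition cscn_alpha :: "(('a + nat \<times> nat) set \<Rightarrow> real) \<Rightarrow> ('a + nat \<times> nat) set set \<Rightarrow> real" where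
  "cscn_alpha w Es = (\<Sum>e\<in>Es. w e) / real (card Es)"

definition cscn_beta :: "(('a + nat \<times> nat) set \<Rightarrow> real) \<Rightarrow> ('a + nat \<times> nat) set set
     \<Rightarrow> ('a + nat \<times> nat) set set \<Rightarrow> real" where
  "cscn_beta w E Es = (\<Sum>e\<in>E - Es. w e) / real (card Es)"

definition cscn_A :: "nat \<Rightarrow> nat \<Rightarrow> real \<Rightarrow> real" where
  "cscn_A s t k = (real (s * t) + k) / (real (s * t) + 2 * k)"

definition cscn_B :: "'a set set \<Rightarrow> nat \<Rightarrow> nat \<Rightarrow> real \<Rightarrow> real" where
  "cscn_B E' s t k = ((1/2) * (real (card E') - 2 * k)) / (real (s * t) + 2 * k)"

definition cscn_admissible ::
  "'a set \<Rightarrow> 'a set set \<Rightarrow> (nat \<Rightarrow> 'a) \<Rightarrow> nat \<Rightarrow> nat \<Rightarrow> real \<Rightarrow> ('a + nat \<times> nat) set set \<Rightarrow> bool" where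
  "cscn_admissible V' E' u s t k Es \<longleftrightarrow>
     Es \<noteq> {} \<and> Es \<subseteq> cscn_E V' s t \<and> graph_connected (\<Union>Es) Es \<and>
     cscn_alpha (cscn_w E' u s t) Es \<ge> cscn_A s t k \<and>
     cscn_beta (cscn_w E' u s t) (cscn_E V' s t) Es \<le> cscn_B E' s t k"

end

theory Submission
  imports Defs
begin

text \<open>The spokes \<open>{v\<^sub>i\<^sub>,\<^sub>j, u\<^sub>i}\<close> carry weight 1 and the old edges weight 1/2, so the total weight
  is at least \<open>st + |E'|/2\<close>; every other edge weighs at most 1/2. Hence a set of \<open>m\<close> edges
  carries weight at most \<open>m/2 + st/2\<close>, leaving at least \<open>(st + |E'| - m)/2\<close> outside it, and
  \<open>(C - m)/m\<close> is decreasing in \<open>m\<close>, with value \<open>2B\<close> at \<open>m = st + 2k\<close> for \<open>C = st + |E'|\<close>.\<close>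

definition cscn_spokes :: "(nat \<Rightarrow> 'a) \<Rightarrow> nat \<Rightarrow> nat \<Rightarrow> ('a + nat \<times> nat) set set" where
  "cscn_spokes u s t = (\<lambda>(i, j). {Inr (i, j), Inl (u i)}) ` ({1..s} \<times> {1..t})"

definition cscn_old_edges :: "'a set set \<Rightarrow> ('a + nat \<times> nat) set set" where
  "cscn_old_edges E' = (`) Inl ` E'"

lemma finite_cscn_E:
  assumes "finite V'"
  shows "finite (cscn_E V' s t)"
proof -
  have "finite (cscn_V V' s t)"
    using assms unfolding cscn_V_def by simp
  moreover have "cscn_E V' s t \<subseteq> Pow (cscn_V V' s t)"
    unfolding cscn_E_def simple_edges_def by auto
  ultimately show ?thesis
    by (simp add: finite_subset)
qed

lemma finite_cscn_spokes: "finite (cscn_spokes u s t)"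
  unfolding cscn_spokes_def by simp

lemma card_cscn_spokes: "card (cscn_spokes u s t) = s * t"
proof -
  have "inj_on (\<lambda>(i, j). {Inr (i, j), Inl (u i)} :: ('a + nat \<times> nat) set) ({1..s} \<times> {1..t})"
    by (auto simp: inj_on_def doubleton_eq_iff)
  then show ?thesis
    unfolding cscn_spokes_def by (simp add: card_image)
qed

lemma card_cscn_old_edges: "card (cscn_old_edges E') = card E'"
  unfolding cscn_old_edges_def
  by (rule card_image) (auto simp: inj_on_def inj_image_eq_iff)

lemma cscn_spokes_subset_E:
  assumes "u ` {1..s} \<subseteq> V'"
  shows "cscn_spokes u s t \<subseteq> cscn_E V' s t"
proof
  fix e assume "e \<in> cscn_spokes u s t"
  then obtain i j where ij: "i \<in> {1..s}" "j \<in> {1..t}" "e = {Inr (i, j), Inl (u i)}"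
    unfolding cscn_spokes_def by auto
  moreover have "u i \<in> V'"
    using assms ij(1) by blast
  ultimately have "Inr (i, j) \<in> cscn_V V' s t" "Inl (u i) \<in> cscn_V V' s t"
    unfolding cscn_V_def by auto
  then show "e \<in> cscn_E V' s t"
    unfolding cscn_E_def simple_edges_def using ij by blast
qed

lemma cscn_old_edges_subset_E:
  assumes "E' \<subseteq> simple_edges V'"
  shows "cscn_old_edges E' \<subseteq> cscn_E V' s t"
proof
  fix e assume "e \<in> cscn_old_edges E'"
  then obtain x y where "e = {Inl x, Inl y}" "x \<in> V'" "y \<in> V'" "x \<noteq> y"
    using assms unfolding cscn_old_edges_def simple_edges_def by auto
  then show "e \<in> cscn_E V' s t"
    unfolding cscn_E_def simple_edges_def cscn_V_def by auto
qed

lemma cscn_spokes_disjoint_old_edges: "cscn_spokes u s t \<inter> cscn_old_edges E' = {}"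
  unfolding cscn_spokes_def cscn_old_edges_def by auto

lemma cscn_w_nonneg: "cscn_w E' u s t e \<ge> 0"
  unfolding cscn_w_def by auto

lemma cscn_w_le_one: "cscn_w E' u s t e \<le> 1"
  unfolding cscn_w_def by auto

lemma cscn_w_le_half:
  assumes "e \<notin> cscn_spokes u s t"
  shows "cscn_w E' u s t e \<le> 1/2"
  using assms unfolding cscn_w_def cscn_spokes_def by (auto simp: image_iff)

lemma cscn_w_spoke:
  assumes "e \<in> cscn_spokes u s t"
  shows "cscn_w E' u s t e = 1"
  using assms unfolding cscn_w_def cscn_spokes_def by auto

lemma cscn_w_old_edge:
  assumes "e \<in> cscn_old_edges E'"
  shows "cscn_w E' u s t e = 1/2"
  using assms unfolding cscn_w_def cscn_old_edges_def by auto

lemma cscn_total_weight_ge: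
  assumes "finite V'" "E' \<subseteq> simple_edges V'" "u ` {1..s} \<subseteq> V'"
  shows "(\<Sum>e\<in>cscn_E V' s t. cscn_w E' u s t e) \<ge> real (s * t) + real (card E') / 2"
proof -
  let ?w = "cscn_w E' u s t"
  let ?P = "cscn_spokes u s t" and ?Q = "cscn_old_edges E'"
  have "finite E'"
    using assms(1,2) finite_subset[of E' "Pow V'"] unfolding simple_edges_def by auto
  then have "finite ?Q"
    unfolding cscn_old_edges_def by simp
  have "real (s * t) + real (card E') / 2 = sum ?w ?P + sum ?w ?Q"
    by (simp add: cscn_w_spoke cscn_w_old_edge card_cscn_spokes card_cscn_old_edges)
  also have "\<dots> = sum ?w (?P \<union> ?Q)"
    by (rule sum.union_disjoint[symmetric])
      (simp_all add: \<open>finite ?Q\<close> finite_cscn_spokes cscn_spokes_disjoint_old_edges)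
  also have "\<dots> \<le> sum ?w (cscn_E V' s t)"
    using assms(1) cscn_spokes_subset_E[OF assms(3)] cscn_old_edges_subset_E[OF assms(2)]
    by (intro sum_mono2 finite_cscn_E) (auto simp: cscn_w_nonneg)
  finally show ?thesis .
qed

lemma cscn_weight_le:
  assumes "finite Es"
  shows "(\<Sum>e\<in>Es. cscn_w E' u s t e) \<le> real (card Es) / 2 + real (s * t) / 2"
proof -
  let ?w = "cscn_w E' u s t" and ?P = "cscn_spokes u s t"
  have "sum ?w Es = sum ?w (Es \<inter> ?P) + sum ?w (Es - ?P)"
    using assms by (rule sum.Int_Diff)
  also have "\<dots> \<le> real (card (Es \<inter> ?P)) * 1 + real (card (Es - ?P)) * (1/2)"
    by (intro add_mono sum_bounded_above cscn_w_le_one cscn_w_le_half) auto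
  also have "\<dots> = real (card Es) / 2 + real (card (Es \<inter> ?P)) / 2"
    using card_Int_Diff[OF assms, of ?P] by (simp add: field_simps)
  also have "\<dots> \<le> real (card Es) / 2 + real (s * t) / 2"
    using card_mono[OF finite_cscn_spokes Int_lower2[of Es]]
    by (simp add: card_cscn_spokes del: of_nat_mult)
  finally show ?thesis .
qed

lemma excess_ratio_strict_antimono:
  fixes m N C :: real
  assumes "0 < m" "m < N" "N \<le> C"
  shows "(C - N) / (2 * N) < (C - m) / (2 * m)"
proof -
  have "C / N < C / m"
    using assms by (intro divide_strict_left_mono) auto
  then show ?thesis
    using assms by (simp add: field_simps)
qed

lemma cscn_beta_gt_B:
  assumes "finite V'" "E' \<subseteq> simple_edges V'" "u ` {1..s} \<subseteq> V'"
    and "real (card E') \<ge> 2 * k"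
    and "Es \<noteq> {}" "Es \<subseteq> cscn_E V' s t" "real (card Es) < real (s * t) + 2 * k"
  shows "cscn_beta (cscn_w E' u s t) (cscn_E V' s t) Es > cscn_B E' s t k"
proof -
  let ?w = "cscn_w E' u s t" and ?E = "cscn_E V' s t"
  define m where "m = real (card Es)"
  define C where "C = real (s * t) + real (card E')"
  have "finite Es"
    using assms(1,6) finite_cscn_E finite_subset by blast
  then have "m > 0"
    using assms(5) by (simp add: m_def card_gt_0_iff)
  have "sum ?w (?E - Es) = sum ?w ?E - sum ?w Es"
    using assms(1,6) by (simp add: sum_diff finite_cscn_E)
  then have outside: "sum ?w (?E - Es) \<ge> (C - m) / 2"
    using cscn_total_weight_ge[OF assms(1-3), of t] cscn_weight_le[OF \<open>finite Es\<close>, of E' u s t]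
    unfolding C_def m_def by (simp add: field_simps)
  have "cscn_B E' s t k = (C - (real (s * t) + 2 * k)) / (2 * (real (s * t) + 2 * k))"
    by (simp add: cscn_B_def C_def field_simps)
  also have "\<dots> < (C - m) / (2 * m)"
    using \<open>m > 0\<close> assms(4,7) by (intro excess_ratio_strict_antimono) (auto simp: m_def C_def)
  also have "\<dots> \<le> sum ?w (?E - Es) / m"
    using \<open>m > 0\<close> divide_right_mono[OF outside, of m] by simp
  finally show ?thesis
    by (simp add: cscn_beta_def m_def)
qed

theorem lemma1:
  fixes V' :: "'a set" and E' :: "'a set set" and u :: "nat \<Rightarrow> 'a"
    and s t :: nat and k :: real
  assumes "finite V'"
    and "E' \<subseteq> simple_edges V'"
    and "graph_connected V' E'"
    and "inj_on u {1..s}"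
    and "u ` {1..s} \<subseteq> V'"
    and "k \<ge> 0"
    and "real (card E') \<ge> 2 * k"
    and "t \<ge> 1"
  shows "\<forall>Es. Es \<noteq> {} \<and> Es \<subseteq> cscn_E V' s t \<and> real (card Es) < real (s * t) + 2 * k \<longrightarrow>
           cscn_beta (cscn_w E' u s t) (cscn_E V' s t) Es > cscn_B E' s t k \<and>
           \<not> cscn_admissible V' E' u s t k Es"
proof (intro allI impI)
  fix Es
  assume "Es \<noteq> {} \<and> Es \<subseteq> cscn_E V' s t \<and> real (card Es) < real (s * t) + 2 * k"
  then have "cscn_beta (cscn_w E' u s t) (cscn_E V' s t) Es > cscn_B E' s t k"
    using assms(1,2,5,7) by (intro cscn_beta_gt_B) auto
  then show "cscn_beta (cscn_w E' u s t) (cscn_E V' s t) Es > cscn_B E' s t k \<and>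
      \<not> cscn_admissible V' E' u s t k Es"
    unfolding cscn_admissible_def by auto
qed

end
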